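(* Let $G$ be a graph on $K$ vertices and let $m$ satisfy $3\le m\le K$. If the average degree of $G$ is at least $m$, then $G$ contains a connected-matching on at least $m$ vertices.
   Context: A matching is a set of pairwise vertex-disjoint edges; its number of vertices is twice its number of edges. A connected-matching is a matching all of whose edges lie in the same connected component of $G$. *)

theory Defs
  imports Complex_Main
begin

definition simple_graph :: "'a set \<Rightarrow> 'a set set \<Rightarrow> bool" where
  "simple_graph V E \<longleftrightarrow> finite V \<and> (\<forall>e\<in>E. e \<subseteq> V \<and> card e = 2)"

definition degree :: "'a set set \<Rightarrow> 'a \<Rightarrow> nat" where
  "degree E v = card {e\<in>E. v \<in> e}"

definition average_degree :: "'a set \<Rightarrow> 'a set set \<Rightarrow> real" where
  "average_degree V E = (\<Sum>v\<in>V. real (degree E v)) / real (card V)"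

definition adj :: "'a set set \<Rightarrow> 'a \<Rightarrow> 'a \<Rightarrow> bool" where
  "adj E u v \<longleftrightarrow> {u, v} \<in> E"

definition connected_in :: "'a set set \<Rightarrow> 'a \<Rightarrow> 'a \<Rightarrow> bool" where
  "connected_in E u v \<longleftrightarrow> (adj E)\<^sup>*\<^sup>* u v"

definition matching :: "'a set set \<Rightarrow> 'a set set \<Rightarrow> bool" where
  "matching E M \<longleftrightarrow> M \<subseteq> E \<and> (\<forall>e\<in>M. \<forall>f\<in>M. e \<noteq> f \<longrightarrow> e \<inter> f = {})"

definition connected_matching :: "'a set set \<Rightarrow> 'a set set \<Rightarrow> bool" where
  "connected_matching E M \<longleftrightarrow> matching E M \<and>
     (\<forall>u\<in>\<Union>M. \<forall>v\<in>\<Union>M. connected_in E u v)"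

end

theory Submission
  imports Defs
begin

text \<open>Fix a connected component C and a maximum matching M inside it, with s edges, matched
  vertex set W and unmatched remainder U = C - W. By maximality U is independent, and the two ends
  of a matching edge cannot have distinct neighbours in U (that would be an augmenting path), so
  together they send at most |U| + 1 edges into U. Counting degrees then gives
  \<open>\<Sum>x\<in>C. deg x \<le> 2s(2s - 1) + 2s(|U| + 1) = 2s |C|\<close>. If no connected matching covers m
  vertices, then 2s \<le> m - 1 in every component, so the average degree is at most m - 1.\<close>

definition neighbours :: "'a set set \<Rightarrow> 'a \<Rightarrow> 'a set" where
  "neighbours E x = {y. {x, y} \<in> E}"

lemma simple_graph_finite_edges: "simple_graph V E \<Longrightarrow> finite E"
  unfolding simple_graph_def by (meson Pow_iff finite_Pow_iff finite_subset subsetI)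

lemma simple_graph_edgeD:
  assumes "simple_graph V E" "{x, y} \<in> E"
  shows "x \<noteq> y" "x \<in> V" "y \<in> V"
  using assms unfolding simple_graph_def by (auto simp: card_insert_if split: if_splits)

lemma neighbours_sym: "y \<in> neighbours E x \<longleftrightarrow> x \<in> neighbours E y"
  unfolding neighbours_def by (simp add: insert_commute)

lemma neighbours_subset:
  assumes "simple_graph V E" shows "neighbours E x \<subseteq> V - {x}"
  unfolding neighbours_def using simple_graph_edgeD[OF assms] by blast

lemma card_neighbours_Int_le:
  assumes "simple_graph V E" "finite W" "x \<in> W"
  shows "card (neighbours E x \<inter> W) \<le> card W - 1"
proof -
  have "card (neighbours E x \<inter> W) \<le> card (W - {x})"
    using neighbours_subset[OF assms(1), of x] assms(2) by (intro card_mono) auto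
  then show ?thesis
    using card_Diff_singleton[OF assms(3)] by simp
qed

lemma degree_eq_card_neighbours:
  assumes "simple_graph V E" shows "degree E x = card (neighbours E x)"
proof -
  have "{e\<in>E. x \<in> e} = (\<lambda>y. {x, y}) ` neighbours E x"
  proof (intro equalityI subsetI)
    fix e assume "e \<in> {e\<in>E. x \<in> e}"
    with assms obtain a b where "e = {a, b}" "e \<in> E" "x \<in> e"
      unfolding simple_graph_def by (auto simp: card_2_iff)
    then show "e \<in> (\<lambda>y. {x, y}) ` neighbours E x"
      unfolding neighbours_def by (auto simp: insert_commute)
  qed (auto simp: neighbours_def)
  moreover have "inj_on (\<lambda>y. {x, y}) (neighbours E x)"
    by (rule inj_onI) (use neighbours_subset[OF assms] in \<open>auto simp: doubleton_eq_iff\<close>)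
  ultimately show ?thesis
    unfolding degree_def by (simp add: card_image)
qed

definition connected_rel :: "'a set \<Rightarrow> 'a set set \<Rightarrow> 'a rel" where
  "connected_rel V E = {(u, v). u \<in> V \<and> v \<in> V \<and> connected_in E u v}"

lemma equivp_connected_in: "equivp (connected_in E)"
proof -
  have "symp (adj E)"
    by (rule sympI) (simp add: adj_def insert_commute)
  then show ?thesis
    unfolding connected_in_def[abs_def] by (rule equivp_rtranclp)
qed

lemma equiv_connected_rel: "equiv V (connected_rel V E)"
  using equivp_connected_in[of E]
  by (intro equivI) (auto simp: connected_rel_def refl_on_def sym_def trans_def
      elim!: equivpE dest: reflpD sympD transpD)

lemma component_closed_neighbours:
  assumes "simple_graph V E" "X \<in> V // connected_rel V E" "x \<in> X" "y \<in> neighbours E x"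
  shows "y \<in> X"
proof -
  obtain v where X: "X = connected_rel V E `` {v}" "v \<in> V"
    using assms(2) by (rule quotientE)
  have "connected_in E v x" "x \<in> V"
    using assms(3) unfolding X connected_rel_def by auto
  moreover have "adj E x y" "y \<in> V"
    using assms(4) neighbours_subset[OF assms(1)] unfolding neighbours_def adj_def by auto
  ultimately have "connected_in E v y"
    unfolding connected_in_def by (blast intro: rtranclp.rtrancl_into_rtrancl)
  with X \<open>y \<in> V\<close> show ?thesis
    unfolding connected_rel_def by auto
qed

lemma connected_matching_within_component:
  assumes "matching E M" "\<Union>M \<subseteq> X" "X \<in> V // connected_rel V E"
  shows "connected_matching E M"
proof -
  have "X \<times> X \<subseteq> connected_rel V E"
    using quotient_eq_iff[OF equiv_connected_rel assms(3) assms(3)] by blast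
  then show ?thesis
    using assms(1,2) unfolding connected_matching_def connected_rel_def by blast
qed

lemma sum_le_mult_card_by_classes:
  fixes f :: "'a \<Rightarrow> nat"
  assumes "equiv A r" "finite A" "\<And>X. X \<in> A // r \<Longrightarrow> sum f X \<le> c * card X"
  shows "sum f A \<le> c * card A"
proof -
  have fin: "\<forall>X\<in>A // r. finite X"
    using finite_equiv_class[OF assms(2) equiv_type[OF assms(1)]] by blast
  have disj: "\<forall>X\<in>A // r. \<forall>Y\<in>A // r. X \<noteq> Y \<longrightarrow> X \<inter> Y = {}"
    using quotient_disj[OF assms(1)] by blast
  have "sum f A = (\<Sum>X\<in>A // r. sum f X)"
    using sum.Union_disjoint[OF fin disj, of f] by (simp add: Union_quotient[OF assms(1)])
  also have "\<dots> \<le> (\<Sum>X\<in>A // r. c * card X)"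
    by (rule sum_mono) (rule assms(3))
  also have "\<dots> = c * card A"
    using card_Union_disjoint[of "A // r"] fin disj
    by (simp add: sum_distrib_left Union_quotient[OF assms(1)] pairwise_def disjnt_def)
  finally show ?thesis .
qed

lemma matching_insert:
  assumes "matching E M" "e \<in> E" "e \<inter> \<Union>M = {}"
  shows "matching E (insert e M)"
  using assms unfolding matching_def by blast

lemma card_Union_matching:
  assumes "simple_graph V E" "matching E M"
  shows "card (\<Union>M) = 2 * card M"
proof -
  have edges: "\<And>e. e \<in> M \<Longrightarrow> card e = 2"
    using assms unfolding simple_graph_def matching_def by blast
  have "card (\<Union>M) = sum card M"
    using assms(2) edges
    by (intro card_Union_disjoint) (auto simp: matching_def pairwise_def disjnt_def card_ge_0_finite)
  also have "\<dots> = 2 * card M"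
    by (simp add: edges)
  finally show ?thesis .
qed

definition max_matching_within :: "'a set set \<Rightarrow> 'a set \<Rightarrow> 'a set set \<Rightarrow> bool" where
  "max_matching_within E C M \<longleftrightarrow> matching E M \<and> \<Union>M \<subseteq> C \<and>
     (\<forall>M'. matching E M' \<and> \<Union>M' \<subseteq> C \<longrightarrow> card M' \<le> card M)"

lemma ex_max_matching_within:
  assumes "finite E" shows "\<exists>M. max_matching_within E C M"
proof -
  have "matching E {} \<and> \<Union>{} \<subseteq> C"
    unfolding matching_def by simp
  moreover have "\<forall>M. matching E M \<and> \<Union>M \<subseteq> C \<longrightarrow> card M < Suc (card E)"
    using assms by (auto simp: matching_def less_Suc_eq_le intro: card_mono)
  ultimately have "\<exists>M. (matching E M \<and> \<Union>M \<subseteq> C) \<and>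
      (\<forall>M'. matching E M' \<and> \<Union>M' \<subseteq> C \<longrightarrow> card M' \<le> card M)"
    by (rule ex_has_greatest_nat)
  then show ?thesis
    unfolding max_matching_within_def by simp
qed

lemma max_matching_withinD:
  assumes "finite E" "max_matching_within E C M"
  shows "matching E M" "\<Union>M \<subseteq> C" "finite M"
  using assms unfolding max_matching_within_def matching_def by (auto intro: finite_subset)

lemma max_matching_within_edge_meets:
  assumes "finite E" "max_matching_within E C M" "{x, y} \<in> E" "x \<in> C" "y \<in> C"
  shows "x \<in> \<Union>M \<or> y \<in> \<Union>M"
proof (rule ccontr)
  assume unmatched: "\<not> (x \<in> \<Union>M \<or> y \<in> \<Union>M)"
  note M = max_matching_withinD[OF assms(1,2)]
  have "matching E (insert {x, y} M)"
    using M(1) assms(3) unmatched by (intro matching_insert) auto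
  moreover have "\<Union>(insert {x, y} M) \<subseteq> C"
    using M(2) assms(4,5) by auto
  ultimately have "card (insert {x, y} M) \<le> card M"
    using assms(2) unfolding max_matching_within_def by blast
  moreover have "{x, y} \<notin> M"
    using unmatched by blast
  ultimately show False
    using M(3) by simp
qed

lemma max_matching_within_no_augmenting_path:
  assumes "simple_graph V E" "max_matching_within E C M" "{u, w} \<in> M"
    and "{u, a} \<in> E" "{w, b} \<in> E" "a \<in> C - \<Union>M" "b \<in> C - \<Union>M"
  shows "a = b"
proof (rule ccontr)
  assume "a \<noteq> b"
  note M = max_matching_withinD[OF simple_graph_finite_edges[OF assms(1)] assms(2)]
  define M0 where "M0 = M - {{u, w}}"
  have "u \<noteq> w"
    using assms(3) M(1) simple_graph_edgeD[OF assms(1)] unfolding matching_def by blast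
  have "matching E M0"
    using M(1) unfolding M0_def matching_def by blast
  have "f \<inter> {u, w} = {}" if "f \<in> M0" for f
    using M(1) assms(3) that unfolding M0_def matching_def by (metis DiffE singletonI)
  then have M0: "{u, w, a, b} \<inter> \<Union>M0 = {}"
    using assms(6,7) unfolding M0_def by auto
  have "u \<in> \<Union>M" "w \<in> \<Union>M"
    using assms(3) by auto
  then have "{w, b} \<inter> \<Union>M0 = {}" "{u, a} \<inter> \<Union>(insert {w, b} M0) = {}"
    using M0 \<open>a \<noteq> b\<close> \<open>u \<noteq> w\<close> assms(6,7) by auto
  then have "matching E (insert {u, a} (insert {w, b} M0))"
    using \<open>matching E M0\<close> assms(4,5) by (intro matching_insert) auto
  moreover have "\<Union>(insert {u, a} (insert {w, b} M0)) \<subseteq> C"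
    using M(2) assms(3,6,7) unfolding M0_def by auto
  ultimately have "card (insert {u, a} (insert {w, b} M0)) \<le> card M"
    using assms(2) unfolding max_matching_within_def by blast
  moreover have "{w, b} \<notin> M0" "{u, a} \<notin> insert {w, b} M0"
    using M0 \<open>u \<noteq> w\<close> \<open>u \<in> \<Union>M\<close> assms(7) by (auto simp: doubleton_eq_iff)
  then have "card (insert {u, a} (insert {w, b} M0)) = card M0 + 2"
    using M(3) unfolding M0_def by simp
  moreover have "card M0 + 1 = card M"
    using card.remove[OF M(3) assms(3)] unfolding M0_def by simp
  ultimately show False
    by linarith
qed

lemma card_add_card_le_Suc_card:
  assumes "finite U" "A \<subseteq> U" "B \<subseteq> U" "\<And>a b. a \<in> A \<Longrightarrow> b \<in> B \<Longrightarrow> a = b"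
  shows "card A + card B \<le> Suc (card U)"
proof (cases "A = {} \<or> B = {}")
  case True
  then show ?thesis
    using card_mono[OF assms(1,2)] card_mono[OF assms(1,3)] by auto
next
  case False
  then obtain c where "A = {c}" "B = {c}"
    using assms(4) by blast
  moreover have "card U \<noteq> 0"
    using assms(1,2) \<open>A = {c}\<close> by auto
  ultimately show ?thesis
    by simp
qed

lemma sum_card_neighbours_Int_swap:
  assumes "finite U" "finite W"
  shows "(\<Sum>a\<in>U. card (neighbours E a \<inter> W)) = (\<Sum>x\<in>W. card (neighbours E x \<inter> U))"
proof -
  have "(\<Sum>a\<in>U. card (neighbours E a \<inter> W)) = (\<Sum>a\<in>U. \<Sum>x\<in>W. if x \<in> neighbours E a then 1 else 0)"
    using assms(2) by (intro sum.cong) (auto simp: sum.If_cases Int_def conj_commute)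
  also have "\<dots> = (\<Sum>x\<in>W. \<Sum>a\<in>U. if a \<in> neighbours E x then 1 else 0)"
    by (subst sum.swap) (simp add: neighbours_sym)
  also have "\<dots> = (\<Sum>x\<in>W. card (neighbours E x \<inter> U))"
    using assms(1) by (intro sum.cong) (auto simp: sum.If_cases Int_def conj_commute)
  finally show ?thesis .
qed

lemma sum_card_neighbours_unmatched_le:
  assumes "simple_graph V E" "finite C" "max_matching_within E C M"
  shows "(\<Sum>x\<in>\<Union>M. card (neighbours E x \<inter> (C - \<Union>M))) \<le> card M * Suc (card (C - \<Union>M))"
proof -
  let ?f = "\<lambda>x. card (neighbours E x \<inter> (C - \<Union>M))"
  note M = max_matching_withinD[OF simple_graph_finite_edges[OF assms(1)] assms(3)]
  have edge: "\<exists>u w. e = {u, w} \<and> u \<noteq> w" if "e \<in> M" for e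
    using that M(1) assms(1) unfolding matching_def simple_graph_def by (auto simp: card_2_iff)
  have "(\<Sum>x\<in>\<Union>M. ?f x) = (\<Sum>e\<in>M. \<Sum>x\<in>e. ?f x)"
    using sum.Union_disjoint[of M ?f] M edge by (auto simp: matching_def)
  also have "\<dots> \<le> (\<Sum>e\<in>M. Suc (card (C - \<Union>M)))"
  proof (rule sum_mono)
    fix e assume "e \<in> M"
    then obtain u w where e: "e = {u, w}" "u \<noteq> w"
      using edge by blast
    have "card (neighbours E u \<inter> (C - \<Union>M)) + card (neighbours E w \<inter> (C - \<Union>M))
        \<le> Suc (card (C - \<Union>M))"
      using assms(2) max_matching_within_no_augmenting_path[OF assms(1,3)] \<open>e \<in> M\<close> e(1)
      by (intro card_add_card_le_Suc_card) (auto simp: neighbours_def)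
    then show "(\<Sum>x\<in>e. ?f x) \<le> Suc (card (C - \<Union>M))"
      using e by simp
  qed
  finally show ?thesis
    by simp
qed

lemma sum_degree_le_max_matching_within:
  assumes sg: "simple_graph V E" and "finite C"
    and closed: "\<And>x. x \<in> C \<Longrightarrow> neighbours E x \<subseteq> C"
    and max: "max_matching_within E C M"
  shows "(\<Sum>x\<in>C. degree E x) \<le> 2 * card M * card C"
proof -
  define W where "W = \<Union>M"
  define U where "U = C - W"
  let ?N = "neighbours E"
  have "matching E M" "W \<subseteq> C"
    using max unfolding max_matching_within_def W_def by auto
  have card_W: "card W = 2 * card M"
    unfolding W_def using card_Union_matching[OF sg \<open>matching E M\<close>] .
  have fin: "finite W" "finite U" and C: "C = W \<union> U" "W \<inter> U = {}"
    using \<open>finite C\<close> \<open>W \<subseteq> C\<close> unfolding U_def by (auto intro: finite_subset)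
  have degree_split: "degree E x = card (?N x \<inter> W) + card (?N x \<inter> U)" if "x \<in> C" for x
  proof -
    have "?N x = (?N x \<inter> W) \<union> (?N x \<inter> U)"
      using closed[OF that] C by blast
    then show ?thesis
      using fin C(2) degree_eq_card_neighbours[OF sg]
      by (metis card_Un_disjoint disjoint_iff finite_Int IntD2)
  qed
  have "?N a \<inter> U = {}" if "a \<in> U" for a
    using that closed max_matching_within_edge_meets[OF simple_graph_finite_edges[OF sg] max]
    unfolding U_def W_def neighbours_def by blast
  then have "(\<Sum>a\<in>U. degree E a) = (\<Sum>a\<in>U. card (?N a \<inter> W))"
    using degree_split C(1) by (intro sum.cong) auto
  also have "\<dots> = (\<Sum>x\<in>W. card (?N x \<inter> U))"
    using sum_card_neighbours_Int_swap[OF fin(2,1)] .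
  finally have sum_U: "(\<Sum>a\<in>U. degree E a) = (\<Sum>x\<in>W. card (?N x \<inter> U))" .
  have sum_W: "(\<Sum>x\<in>W. card (?N x \<inter> W)) \<le> card W * (card W - 1)"
    using sum_mono[of W "\<lambda>x. card (?N x \<inter> W)" "\<lambda>_. card W - 1"]
      card_neighbours_Int_le[OF sg fin(1)] by simp
  have sum_W_degree: "(\<Sum>x\<in>W. degree E x) = (\<Sum>x\<in>W. card (?N x \<inter> W)) + (\<Sum>x\<in>W. card (?N x \<inter> U))"
    using degree_split C(1) by (simp add: sum.distrib)
  have "(\<Sum>x\<in>C. degree E x) = (\<Sum>x\<in>W. degree E x) + (\<Sum>a\<in>U. degree E a)"
    using fin C by (simp add: sum.union_disjoint)
  also have "\<dots> = (\<Sum>x\<in>W. card (?N x \<inter> W)) + 2 * (\<Sum>x\<in>W. card (?N x \<inter> U))"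
    by (simp only: sum_W_degree sum_U)
  also have "\<dots> \<le> card W * (card W - 1) + 2 * (card M * Suc (card U))"
    using sum_W sum_card_neighbours_unmatched_le[OF sg \<open>finite C\<close> max]
    unfolding U_def W_def by (intro add_mono) simp_all
  also have "\<dots> = 2 * card M * card C"
    using card_W fin C by (cases "card M") (simp_all add: card_Un_disjoint algebra_simps)
  finally show ?thesis .
qed

lemma sum_degree_le_if_no_large_connected_matching:
  assumes sg: "simple_graph V E"
    and small: "\<And>M. connected_matching E M \<Longrightarrow> 2 * card M < m"
  shows "(\<Sum>v\<in>V. degree E v) \<le> (m - 1) * card V"
proof (rule sum_le_mult_card_by_classes[OF equiv_connected_rel])
  show "finite V"
    using sg unfolding simple_graph_def by simp
  fix X assume X: "X \<in> V // connected_rel V E"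
  then have "finite X"
    using finite_equiv_class[OF \<open>finite V\<close> equiv_type[OF equiv_connected_rel]] by blast
  obtain M where max: "max_matching_within E X M"
    using ex_max_matching_within[OF simple_graph_finite_edges[OF sg]] by blast
  then have "connected_matching E M"
    using X unfolding max_matching_within_def by (blast intro: connected_matching_within_component)
  then have "2 * card M \<le> m - 1"
    using small by fastforce
  moreover have "(\<Sum>x\<in>X. degree E x) \<le> 2 * card M * card X"
    using component_closed_neighbours[OF sg X] \<open>finite X\<close> max
    by (intro sum_degree_le_max_matching_within[OF sg]) blast+
  ultimately show "(\<Sum>x\<in>X. degree E x) \<le> (m - 1) * card X"
    by (meson le_trans mult_le_mono1)
qed

theorem corollary7p9:
  fixes V :: "'a set" and E :: "'a set set" and K m :: nat
  assumes "simple_graph V E"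
    and "card V = K"
    and "3 \<le> m" and "m \<le> K"
    and "average_degree V E \<ge> real m"
  shows "\<exists>M. connected_matching E M \<and> 2 * card M \<ge> m"
proof (rule ccontr)
  assume "\<not> ?thesis"
  then have "(\<Sum>v\<in>V. degree E v) \<le> (m - 1) * K"
    using sum_degree_le_if_no_large_connected_matching[OF assms(1)] assms(2) by (meson not_le)
  moreover have "m * K \<le> (\<Sum>v\<in>V. degree E v)"
  proof -
    have "real m * real K \<le> (\<Sum>v\<in>V. real (degree E v))"
      using assms(2-5) unfolding average_degree_def by (simp add: le_divide_eq)
    then show ?thesis
      by (simp flip: of_nat_mult of_nat_sum)
  qed
  moreover have "(m - 1) * K < m * K"
    using assms(3,4) by simp
  ultimately show False
    by linarith
qed

end
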